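(* Let $(X,d)$ be a compact doubling metric space with $\operatorname{diam}(X,d)=1/2$ and let $(\mathcal S,D_2)$ be a hyperbolic filling with parameters $a\ge\lambda\ge6$. If a function $\rho:\mathcal S\to(0,\infty)$ satisfies (H1), (H2) and (H3'), then $\rho$ also satisfies (H3).
   Context: Hyperbolic filling: $X_0\subset X_1\subset\cdots$ increasing, $X_n$ maximal $a^{-n}$-separated in $X$ ($X_0=\{x_0\}$); $\mathcal S_n=\{(x,n):x\in X_n\}$, $\mathcal S=\bigcup_n\mathcal S_n$, $\pi_1(x,n)=x$, $\pi_2(x,n)=n$, $v_0=(x_0,0)$, $B_v=B(\pi_1(v),a^{-\pi_2(v)})$. Each $(x,n)$, $n\ge1$, has a fixed parent $(y,n-1)$ with $d(x,y)=\min_{z\in X_{n-1}}d(x,z)$; genealogy $g(v)=(v_0,\dots,v_k=v)$ with $v_i$ the parent of $v_{i+1}$. Graph $(\mathcal S,D_2)$: edges vertex–parent, and horizontal edges between distinct $(x,n),(y,n)$ with $B(x,\lambda a^{-n})\cap B(y,\lambda a^{-n})\ne\emptyset$; $D_2$ is graph distance. Paths: finite vertex sequences with consecutive ones adjacent; horizontal paths use only horizontal edges. $\pi(v)=\prod_{w\in g(v)}\rho(w)$, $L_\rho(\gamma)=\sum_{v\in\gamma}\pi(v)$. For distinct $x,y$: $\tilde n$ largest integer with $\{x,y\}\subset B(\tilde z,2a^{-\tilde n})$ for some $(\tilde z,\tilde n)\in\mathcal S$; $c(x,y)$ the set of such $(\tilde z,\tilde n)$; $\pi(c(x,y))=\max_{c(x,y)}\pi$.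 $\Gamma_n(x,y)$: paths $(v_1,\dots,v_k)$ with $\pi_2(v_1)=\pi_2(v_k)=n$, $x\in B_{v_1}$, $y\in B_{v_k}$. For $v\in\mathcal S_k$, $\Gamma_k(v)$: horizontal paths $(v_1,\dots,v_n)$ in $\mathcal S_{k+1}$ with $\pi_1(v_1)\in B_v$, $\pi_1(v_n)\notin B(\pi_1(v),2a^{-k})$. $\rho^*(v)=\min\{\rho(w):\pi_2(w)=\pi_2(v),D_2(v,w)\le1\}$; for a horizontal path $\gamma=(v_1,\dots,v_N)$, $L_h(\gamma,\rho)=\sum_{j=1}^{N-1}\rho^*(v_j)\wedge\rho^*(v_{j+1})$. (H1) $0<\eta_-\le\rho\le\eta_+<1$. (H2) $\pi(v)\le K_0\pi(w)$ for horizontally adjacent $v,w$, some $K_0\ge1$. (H3) there is $K_1\ge1$ such that for distinct $x,y$ there is $n_0$ with $L_\rho(\gamma)\ge K_1^{-1}\pi(c(x,y))$ for all $n\ge n_0$, $\gamma\in\Gamma_n(x,y)$. (H3') for all $k\ge0$, $v\in\mathcal S_k$ and $\gamma\in\Gamma_k(v)$, $L_h(\gamma,\rho)\ge1$. *)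

theory Defs
  imports "HOL-Analysis.Analysis"
begin

definition Bx :: "'a::metric_space set \<Rightarrow> 'a \<Rightarrow> real \<Rightarrow> 'a set" where
  "Bx X x r = ball x r \<inter> X"

definition doubling :: "'a::metric_space set \<Rightarrow> bool" where
  "doubling X \<longleftrightarrow> (\<exists>N::nat. \<forall>x\<in>X. \<forall>r>0. \<exists>F. F \<subseteq> X \<and> finite F \<and> card F \<le> N \<and>
      Bx X x r \<subseteq> (\<Union>y\<in>F. Bx X y (r/2)))"

definition separated :: "'a::metric_space set \<Rightarrow> real \<Rightarrow> bool" where
  "separated A e \<longleftrightarrow> (\<forall>x\<in>A. \<forall>y\<in>A. x \<noteq> y \<longrightarrow> dist x y \<ge> e)"

definition maximal_separated :: "'a::metric_space set \<Rightarrow> 'a set \<Rightarrow> real \<Rightarrow> bool" where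
  "maximal_separated X A e \<longleftrightarrow> A \<subseteq> X \<and> separated A e \<and>
     (\<forall>B. A \<subseteq> B \<and> B \<subseteq> X \<and> separated B e \<longrightarrow> B = A)"

definition verts :: "(nat \<Rightarrow> 'a set) \<Rightarrow> ('a \<times> nat) set" where
  "verts Xs = {(x, n). x \<in> Xs n}"

definition hyperbolic_filling ::
  "'a::metric_space set \<Rightarrow> real \<Rightarrow> 'a \<Rightarrow> (nat \<Rightarrow> 'a set) \<Rightarrow> ('a \<times> nat \<Rightarrow> 'a \<times> nat) \<Rightarrow> bool" where
  "hyperbolic_filling X a x0 Xs par \<longleftrightarrow>
     x0 \<in> X \<and> Xs 0 = {x0} \<and> (\<forall>n. Xs n \<subseteq> Xs (Suc n)) \<and>
     (\<forall>n. maximal_separated X (Xs n) (a powr (- real n))) \<and>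
     (\<forall>x n. x \<in> Xs n \<and> n \<ge> 1 \<longrightarrow>
        (\<exists>y. par (x, n) = (y, n - 1) \<and> y \<in> Xs (n - 1) \<and>
             (\<forall>z\<in>Xs (n - 1). dist x y \<le> dist x z)))"

definition hadj ::
  "'a::metric_space set \<Rightarrow> real \<Rightarrow> real \<Rightarrow> (nat \<Rightarrow> 'a set) \<Rightarrow> 'a \<times> nat \<Rightarrow> 'a \<times> nat \<Rightarrow> bool" where
  "hadj X a lam Xs v w \<longleftrightarrow> v \<in> verts Xs \<and> w \<in> verts Xs \<and> snd v = snd w \<and> v \<noteq> w \<and>
     Bx X (fst v) (lam * a powr (- real (snd v))) \<inter> Bx X (fst w) (lam * a powr (- real (snd w))) \<noteq> {}"

definition adj ::
  "'a::metric_space set \<Rightarrow> real \<Rightarrow> real \<Rightarrow> (nat \<Rightarrow> 'a set) \<Rightarrow> ('a \<times> nat \<Rightarrow> 'a \<times> nat)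
     \<Rightarrow> 'a \<times> nat \<Rightarrow> 'a \<times> nat \<Rightarrow> bool" where
  "adj X a lam Xs par v w \<longleftrightarrow> v \<in> verts Xs \<and> w \<in> verts Xs \<and>
     ((snd v \<ge> 1 \<and> w = par v) \<or> (snd w \<ge> 1 \<and> v = par w) \<or> hadj X a lam Xs v w)"

definition is_path ::
  "'a::metric_space set \<Rightarrow> real \<Rightarrow> real \<Rightarrow> (nat \<Rightarrow> 'a set) \<Rightarrow> ('a \<times> nat \<Rightarrow> 'a \<times> nat)
     \<Rightarrow> ('a \<times> nat) list \<Rightarrow> bool" where
  "is_path X a lam Xs par \<gamma> \<longleftrightarrow> \<gamma> \<noteq> [] \<and> set \<gamma> \<subseteq> verts Xs \<and>
     successively (adj X a lam Xs par) \<gamma>"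

definition is_hpath ::
  "'a::metric_space set \<Rightarrow> real \<Rightarrow> real \<Rightarrow> (nat \<Rightarrow> 'a set) \<Rightarrow> ('a \<times> nat) list \<Rightarrow> bool" where
  "is_hpath X a lam Xs \<gamma> \<longleftrightarrow> \<gamma> \<noteq> [] \<and> set \<gamma> \<subseteq> verts Xs \<and>
     successively (hadj X a lam Xs) \<gamma>"

fun genl :: "('b \<Rightarrow> 'b) \<Rightarrow> nat \<Rightarrow> 'b \<Rightarrow> 'b list" where
  "genl par 0 v = [v]"
| "genl par (Suc k) v = genl par k (par v) @ [v]"

definition genealogy :: "('a \<times> nat \<Rightarrow> 'a \<times> nat) \<Rightarrow> 'a \<times> nat \<Rightarrow> ('a \<times> nat) list" where
  "genealogy par v = genl par (snd v) v"

definition piw :: "('a \<times> nat \<Rightarrow> 'a \<times> nat) \<Rightarrow> ('a \<times> nat \<Rightarrow> real) \<Rightarrow> 'a \<times> nat \<Rightarrow> real" where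
  "piw par \<rho> v = prod_list (map \<rho> (genealogy par v))"

definition L_rho :: "('a \<times> nat \<Rightarrow> 'a \<times> nat) \<Rightarrow> ('a \<times> nat \<Rightarrow> real) \<Rightarrow> ('a \<times> nat) list \<Rightarrow> real" where
  "L_rho par \<rho> \<gamma> = (\<Sum>v\<in>set \<gamma>. piw par \<rho> v)"

definition ntilde :: "real \<Rightarrow> (nat \<Rightarrow> 'a::metric_space set) \<Rightarrow> 'a \<Rightarrow> 'a \<Rightarrow> nat" where
  "ntilde a Xs x y = (GREATEST n. \<exists>z\<in>Xs n. x \<in> ball z (2 * a powr (- real n)) \<and>
                                         y \<in> ball z (2 * a powr (- real n)))"

definition cxy :: "'a::metric_space set \<Rightarrow> real \<Rightarrow> (nat \<Rightarrow> 'a set) \<Rightarrow> 'a \<Rightarrow> 'a \<Rightarrow> ('a \<times> nat) set" where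
  "cxy X a Xs x y = (let n = ntilde a Xs x y in
     {(z, n) | z. z \<in> Xs n \<and> {x, y} \<subseteq> Bx X z (2 * a powr (- real n))})"

definition pi_c :: "'a::metric_space set \<Rightarrow> real \<Rightarrow> (nat \<Rightarrow> 'a set) \<Rightarrow> ('a \<times> nat \<Rightarrow> 'a \<times> nat)
    \<Rightarrow> ('a \<times> nat \<Rightarrow> real) \<Rightarrow> 'a \<Rightarrow> 'a \<Rightarrow> real" where
  "pi_c X a Xs par \<rho> x y = Max (piw par \<rho> ` cxy X a Xs x y)"

definition Gamma_xy ::
  "'a::metric_space set \<Rightarrow> real \<Rightarrow> real \<Rightarrow> (nat \<Rightarrow> 'a set) \<Rightarrow> ('a \<times> nat \<Rightarrow> 'a \<times> nat)
     \<Rightarrow> nat \<Rightarrow> 'a \<Rightarrow> 'a \<Rightarrow> ('a \<times> nat) list set" where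
  "Gamma_xy X a lam Xs par n x y = {\<gamma>. is_path X a lam Xs par \<gamma> \<and>
     snd (hd \<gamma>) = n \<and> snd (last \<gamma>) = n \<and>
     x \<in> Bx X (fst (hd \<gamma>)) (a powr (- real n)) \<and> y \<in> Bx X (fst (last \<gamma>)) (a powr (- real n))}"

definition Gamma_v ::
  "'a::metric_space set \<Rightarrow> real \<Rightarrow> real \<Rightarrow> (nat \<Rightarrow> 'a set) \<Rightarrow> 'a \<times> nat \<Rightarrow> ('a \<times> nat) list set" where
  "Gamma_v X a lam Xs v = {\<gamma>. is_hpath X a lam Xs \<gamma> \<and> (\<forall>w\<in>set \<gamma>. snd w = Suc (snd v)) \<and>
     fst (hd \<gamma>) \<in> Bx X (fst v) (a powr (- real (snd v))) \<and>
     fst (last \<gamma>) \<notin> Bx X (fst v) (2 * a powr (- real (snd v)))}"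

text \<open>rho^*(v) = min{rho(w) : pi_2(w) = pi_2(v), D_2(v,w) \<le> 1}; D_2(v,w) \<le> 1 means w = v or w adjacent to v.\<close>
definition rho_star ::
  "'a::metric_space set \<Rightarrow> real \<Rightarrow> real \<Rightarrow> (nat \<Rightarrow> 'a set) \<Rightarrow> ('a \<times> nat \<Rightarrow> 'a \<times> nat)
     \<Rightarrow> ('a \<times> nat \<Rightarrow> real) \<Rightarrow> 'a \<times> nat \<Rightarrow> real" where
  "rho_star X a lam Xs par \<rho> v =
     Min (\<rho> ` {w \<in> verts Xs. snd w = snd v \<and> (w = v \<or> adj X a lam Xs par v w)})"

definition L_h ::
  "'a::metric_space set \<Rightarrow> real \<Rightarrow> real \<Rightarrow> (nat \<Rightarrow> 'a set) \<Rightarrow> ('a \<times> nat \<Rightarrow> 'a \<times> nat)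
     \<Rightarrow> ('a \<times> nat) list \<Rightarrow> ('a \<times> nat \<Rightarrow> real) \<Rightarrow> real" where
  "L_h X a lam Xs par \<gamma> \<rho> = (\<Sum>j<length \<gamma> - 1.
      min (rho_star X a lam Xs par \<rho> (\<gamma> ! j)) (rho_star X a lam Xs par \<rho> (\<gamma> ! Suc j)))"

definition H1 :: "(nat \<Rightarrow> 'a set) \<Rightarrow> ('a \<times> nat \<Rightarrow> real) \<Rightarrow> bool" where
  "H1 Xs \<rho> \<longleftrightarrow> (\<exists>eta_m eta_p. 0 < eta_m \<and> eta_m \<le> eta_p \<and> eta_p < 1 \<and>
      (\<forall>v\<in>verts Xs. eta_m \<le> \<rho> v \<and> \<rho> v \<le> eta_p))"

definition H2 :: "'a::metric_space set \<Rightarrow> real \<Rightarrow> real \<Rightarrow> (nat \<Rightarrow> 'a set) \<Rightarrow> ('a \<times> nat \<Rightarrow> 'a \<times> nat)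
    \<Rightarrow> ('a \<times> nat \<Rightarrow> real) \<Rightarrow> bool" where
  "H2 X a lam Xs par \<rho> \<longleftrightarrow> (\<exists>K0\<ge>1. \<forall>v w. hadj X a lam Xs v w \<longrightarrow> piw par \<rho> v \<le> K0 * piw par \<rho> w)"

definition H3 :: "'a::metric_space set \<Rightarrow> real \<Rightarrow> real \<Rightarrow> (nat \<Rightarrow> 'a set) \<Rightarrow> ('a \<times> nat \<Rightarrow> 'a \<times> nat)
    \<Rightarrow> ('a \<times> nat \<Rightarrow> real) \<Rightarrow> bool" where
  "H3 X a lam Xs par \<rho> \<longleftrightarrow> (\<exists>K1\<ge>1. \<forall>x\<in>X. \<forall>y\<in>X. x \<noteq> y \<longrightarrow>
     (\<exists>n0. \<forall>n\<ge>n0. \<forall>\<gamma>\<in>Gamma_xy X a lam Xs par n x y.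
        L_rho par \<rho> \<gamma> \<ge> pi_c X a Xs par \<rho> x y / K1))"

definition H3' :: "'a::metric_space set \<Rightarrow> real \<Rightarrow> real \<Rightarrow> (nat \<Rightarrow> 'a set) \<Rightarrow> ('a \<times> nat \<Rightarrow> 'a \<times> nat)
    \<Rightarrow> ('a \<times> nat \<Rightarrow> real) \<Rightarrow> bool" where
  "H3' X a lam Xs par \<rho> \<longleftrightarrow> (\<forall>v\<in>verts Xs. \<forall>\<gamma>\<in>Gamma_v X a lam Xs v. L_h X a lam Xs par \<gamma> \<rho> \<ge> 1)"

end

theory Submission
  imports Defs
begin

text \<open>
  For a vertex \<open>p\<close> at level \<open>l\<close> let \<open>pi_min p\<close> be the least weight \<open>\<pi>\<close> on the closed
  horizontal neighbourhood of \<open>p\<close>. The heart of the proof is the estimate that a path which starts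
  in the subtree of \<open>p\<close>, never rises above level \<open>l\<close> and ends at distance at least \<open>4 a\<^sup>-\<^sup>l\<close>
  from \<open>p\<close> has \<open>\<pi>\<close>-weight at least \<open>pi_min p\<close>. Before the path first leaves the ball of radius \<open>4 a\<^sup>-\<^sup>l\<close> around \<open>p\<close>, it either meets
  level \<open>l\<close>, necessarily in the neighbourhood of \<open>p\<close>, or it stays strictly below level \<open>l\<close> and
  can be shadowed by a horizontal path at level \<open>l + 1\<close> that starts at a child of \<open>p\<close>. Each step
  of the shadow taken within \<open>2 a\<^sup>-\<^sup>l\<close> of \<open>p\<close> costs at most \<open>pi_min p\<close> times its \<open>\<rho>\<^sup>*\<close>-length
  and is paid for either by one vertex of the path, whose parent is a neighbour of \<open>p\<close>, or, for an
  excursion that escapes further down, by the induction hypothesis one level lower. Cut at its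
  first exit from the ball of radius \<open>2 a\<^sup>-\<^sup>l\<close>, the shadow belongs to \<open>\<Gamma>\<^sub>l(p)\<close>, so by (H3')
  its horizontal length is at least 1.

  A path in \<open>\<Gamma>\<^sub>n(x,y)\<close> with \<open>n\<close> at least three levels below \<open>m = ntilde a Xs x y\<close> escapes in this
  sense from the ancestor at level \<open>m + 2\<close> of its first vertex. The vertex paying for it lies
  at level \<open>m + 1\<close> or \<open>m + 2\<close>, and its ancestor at level \<open>m\<close> is horizontally adjacent to the
  maximising vertex of \<open>c(x,y)\<close>. (H2) and the lower bound \<open>\<eta>\<close> of (H1) give (H3) with
  \<open>K\<^sub>1 = K\<^sub>0 / \<eta>\<^sup>2\<close>.
\<close>

section \<open>Lists\<close>

lemma successively_take: "successively P xs \<Longrightarrow> successively P (take n xs)"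
  by (metis append_take_drop_id successively_append_iff)

lemma successively_loop_erasure:
  assumes "xs \<noteq> []" "successively R xs"
  obtains ys where "ys \<noteq> []" "distinct ys" "successively R ys" "hd ys = hd xs" "last ys = last xs"
    "set ys \<subseteq> set xs"
  using assms
proof (induction "length xs" arbitrary: xs rule: less_induct)
  case less
  show ?case
  proof (cases "distinct xs")
    case True
    then show ?thesis using less.prems by blast
  next
    case False
    then obtain as bs cs v where xs: "xs = as @ [v] @ bs @ [v] @ cs"
      using not_distinct_decomp by blast
    define zs where "zs = as @ [v] @ cs"
    have "successively R ((as @ [v]) @ (bs @ v # cs))" "successively R ((as @ v # bs) @ (v # cs))"
      using less.prems(3) xs by simp_all
    then have "successively R (as @ [v])" "successively R (v # cs)"
      unfolding successively_append_iff by blast+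
    then have "successively R zs"
      unfolding zs_def successively_append_iff by (auto simp: successively_Cons)
    moreover have "length zs < length xs" "zs \<noteq> []" "hd zs = hd xs" "last zs = last xs"
      "set zs \<subseteq> set xs"
      unfolding zs_def xs by (auto simp: hd_append)
    ultimately show ?thesis using less.hyps less.prems(1) by (metis order.trans)
  qed
qed

lemma first_exit_index:
  assumes "xs \<noteq> []" "P (hd xs)" "\<not> P (last xs)"
  obtains j where "0 < j" "j < length xs" "\<not> P (xs ! j)" "\<And>i. i < j \<Longrightarrow> P (xs ! i)"
proof -
  have ex: "\<exists>j. j < length xs \<and> \<not> P (xs ! j)"
    using assms(1,3) by (intro exI[of _ "length xs - 1"]) (simp add: last_conv_nth)
  define j where "j = (LEAST j. j < length xs \<and> \<not> P (xs ! j))"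
  have j: "j < length xs" "\<not> P (xs ! j)"
    using LeastI_ex[OF ex] unfolding j_def by auto
  have "P (xs ! i)" if "i < j" for i
    using not_less_Least[of i "\<lambda>j. j < length xs \<and> \<not> P (xs ! j)"] that j(1) unfolding j_def by auto
  moreover have "j \<noteq> 0" using j(2) assms(1,2) by (metis hd_conv_nth)
  ultimately show ?thesis using that j by blast
qed

lemma prod_list_pos: "(\<And>x. x \<in> set xs \<Longrightarrow> (0::real) < x) \<Longrightarrow> 0 < prod_list xs"
  by (induction xs) auto

definition hlength_within :: "('b \<Rightarrow> bool) \<Rightarrow> ('b \<Rightarrow> real) \<Rightarrow> 'b list \<Rightarrow> real" where
  "hlength_within I f xs =
     (\<Sum>j<length xs - 1. if I (xs ! j) then min (f (xs ! j)) (f (xs ! Suc j)) else 0)"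

lemma hlength_within_Cons2: "hlength_within I f (x # y # zs) =
    (if I x then min (f x) (f y) else 0) + hlength_within I f (y # zs)"
  unfolding hlength_within_def by (simp add: sum.lessThan_Suc_shift del: sum.lessThan_Suc cong: if_cong)

lemma hlength_within_single: "hlength_within I f [x] = 0"
  unfolding hlength_within_def by simp

section \<open>The hyperbolic filling\<close>

locale filling =
  fixes X :: "'a::metric_space set" and a lam :: real and x0 :: 'a
    and Xs :: "nat \<Rightarrow> 'a set" and par :: "'a \<times> nat \<Rightarrow> 'a \<times> nat"
  assumes compact: "compact X" and lam_le_a: "lam \<le> a" and six_le_lam: "6 \<le> lam"
    and filling: "hyperbolic_filling X a x0 Xs par"
begin

abbreviation V where "V \<equiv> verts Xs"
abbreviation hadjacent where "hadjacent \<equiv> hadj X a lam Xs"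
abbreviation adjacent where "adjacent \<equiv> adj X a lam Xs par"

definition rad :: "nat \<Rightarrow> real" where "rad n = a powr (- real n)"

lemma six_le_a: "6 \<le> a"
  using lam_le_a six_le_lam by linarith

lemma rad_pos: "0 < rad n"
  unfolding rad_def using six_le_a by simp

lemma rad_0: "rad 0 = 1"
  unfolding rad_def using six_le_a by simp

lemma rad_Suc: "rad n = a * rad (Suc n)"
proof -
  have "rad (Suc n) = rad n / a"
    unfolding rad_def using six_le_a by (simp add: powr_diff powr_minus divide_simps powr_add)
  then show ?thesis using six_le_a by simp
qed

lemma lam_rad_Suc_le: "lam * rad (Suc n) \<le> rad n"
  using rad_Suc[of n] mult_right_mono[OF lam_le_a less_imp_le[OF rad_pos]] by simp

lemma six_rad_Suc_le: "6 * rad (Suc n) \<le> rad n"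
  using lam_rad_Suc_le[of n] mult_right_mono[OF six_le_lam less_imp_le[OF rad_pos[of "Suc n"]]]
  by linarith

lemma less_lam_rad: "x < 6 * rad n \<Longrightarrow> x < lam * rad n"
  using mult_right_mono[OF six_le_lam less_imp_le[OF rad_pos[of n]]] by linarith

lemma rad_antimono: "m \<le> n \<Longrightarrow> rad n \<le> rad m"
  unfolding rad_def using six_le_a by (intro powr_mono) auto

lemma in_verts_iff: "w \<in> V \<longleftrightarrow> fst w \<in> Xs (snd w)"
  unfolding verts_def by (cases w) auto

lemma x0_in_X: "x0 \<in> X" and Xs_0: "Xs 0 = {x0}"
  and maximal_separated_Xs: "maximal_separated X (Xs n) (rad n)"
  using filling unfolding hyperbolic_filling_def rad_def by auto

lemma Xs_subset: "Xs n \<subseteq> X"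
  using maximal_separated_Xs[of n] unfolding maximal_separated_def by auto

lemma fst_in_X: "w \<in> V \<Longrightarrow> fst w \<in> X"
  using Xs_subset in_verts_iff by blast

lemma Xs_separated: "x \<in> Xs n \<Longrightarrow> y \<in> Xs n \<Longrightarrow> x \<noteq> y \<Longrightarrow> rad n \<le> dist x y"
  using maximal_separated_Xs[of n] unfolding maximal_separated_def separated_def by auto

lemma Xs_net:
  assumes "x \<in> X"
  shows "\<exists>z\<in>Xs n. dist x z < rad n"
proof (rule ccontr)
  assume far: "\<not> ?thesis"
  then have "x \<notin> Xs n" using rad_pos[of n] by force
  moreover have "separated (insert x (Xs n)) (rad n)"
    using far Xs_separated unfolding separated_def by (auto simp: dist_commute not_less)
  then have "insert x (Xs n) = Xs n"
    using maximal_separated_Xs[of n] assms Xs_subset unfolding maximal_separated_def by blast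
  ultimately show False by blast
qed

text \<open>Compactness suffices here.\<close>
lemma finite_Xs: "finite (Xs n)"
proof -
  obtain k where k: "finite k" "X \<subseteq> (\<Union>c\<in>k. ball c (rad n / 2))"
    using seq_compact_imp_totally_bounded[OF compact_imp_seq_compact[OF compact]] rad_pos[of n] by (meson half_gt_zero)
  define f where "f y = (SOME c. c \<in> k \<and> y \<in> ball c (rad n / 2))" for y
  have f: "f y \<in> k \<and> y \<in> ball (f y) (rad n / 2)" if "y \<in> Xs n" for y
    unfolding f_def by (rule someI_ex) (use k(2) Xs_subset that in blast)
  have "inj_on f (Xs n)"
  proof (rule inj_onI)
    fix y1 y2 assume y: "y1 \<in> Xs n" "y2 \<in> Xs n" "f y1 = f y2"
    then have "dist y1 y2 < rad n"
      using f[OF y(1)] f[OF y(2)] dist_triangle3[of y1 y2 "f y1"] by simp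
    then show "y1 = y2" using Xs_separated[OF y(1,2)] by fastforce
  qed
  moreover have "f ` Xs n \<subseteq> k" using f by auto
  ultimately show ?thesis using k(1) inj_on_finite by blast
qed

lemma parent:
  assumes "w \<in> V" "1 \<le> snd w"
  shows "par w \<in> V" "snd (par w) = snd w - 1" "dist (fst w) (fst (par w)) < rad (snd w - 1)"
proof -
  obtain x n where w: "w = (x, n)" by (cases w)
  have x: "x \<in> Xs n" "1 \<le> n" using assms w in_verts_iff by auto
  obtain y where y: "par (x, n) = (y, n - 1)" "y \<in> Xs (n - 1)" "\<forall>z\<in>Xs (n - 1). dist x y \<le> dist x z"
    using filling x unfolding hyperbolic_filling_def by blast
  show "par w \<in> V" "snd (par w) = snd w - 1" using y w in_verts_iff by auto
  obtain z where "z \<in> Xs (n - 1)" "dist x z < rad (n - 1)"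
    using Xs_net x Xs_subset by blast
  then show "dist (fst w) (fst (par w)) < rad (snd w - 1)" using y w by force
qed

lemma hadjacent_iff: "hadjacent v w \<longleftrightarrow> v \<in> V \<and> w \<in> V \<and> snd v = snd w \<and> v \<noteq> w \<and>
   (\<exists>z\<in>X. dist (fst v) z < lam * rad (snd v) \<and> dist (fst w) z < lam * rad (snd v))"
  unfolding hadj_def Bx_def rad_def by auto

lemma hadjacentI:
  "v \<in> V \<Longrightarrow> w \<in> V \<Longrightarrow> snd v = snd w \<Longrightarrow> v \<noteq> w \<Longrightarrow> dist (fst v) (fst w) < lam * rad (snd v)
    \<Longrightarrow> hadjacent v w"
proof -
  assume "v \<in> V" "w \<in> V" "snd v = snd w" "v \<noteq> w" "dist (fst v) (fst w) < lam * rad (snd v)"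
  moreover have "0 < lam * rad (snd v)" using six_le_lam rad_pos[of "snd v"] by simp
  ultimately show "hadjacent v w"
    unfolding hadjacent_iff using fst_in_X[of w] by (intro conjI bexI[of _ "fst w"]) auto
qed

lemma dist_hadjacent:
  assumes "hadjacent v w"
  shows "dist (fst v) (fst w) < 2 * lam * rad (snd v)"
proof -
  obtain z where "dist (fst v) z < lam * rad (snd v)" "dist (fst w) z < lam * rad (snd v)"
    using assms unfolding hadjacent_iff by blast
  then show ?thesis using dist_triangle2[of "fst v" "fst w" z] by linarith
qed

lemma adjacent_cases:
  assumes "adjacent v w"
  shows "v \<in> V" "w \<in> V" "(snd v = snd w \<and> hadjacent v w) \<or> (snd v = Suc (snd w) \<and> w = par v)
     \<or> (snd w = Suc (snd v) \<and> v = par w)"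
proof -
  show v: "v \<in> V" and w: "w \<in> V" using assms unfolding adj_def by auto
  have "(1 \<le> snd v \<and> w = par v) \<or> (1 \<le> snd w \<and> v = par w) \<or> hadjacent v w"
    using assms unfolding adj_def by auto
  moreover have "snd v = snd w" if "hadjacent v w" using that unfolding hadj_def by auto
  moreover have "snd v = Suc (snd w)" if "1 \<le> snd v" "w = par v"
    using parent(2)[OF v that(1)] that by auto
  moreover have "snd w = Suc (snd v)" if "1 \<le> snd w" "v = par w"
    using parent(2)[OF w that(1)] that by auto
  ultimately show "(snd v = snd w \<and> hadjacent v w) \<or> (snd v = Suc (snd w) \<and> w = par v)
     \<or> (snd w = Suc (snd v) \<and> v = par w)"
    by blast
qed

lemma dist_adjacent:
  assumes "adjacent v w" "Suc k \<le> snd v" "k \<le> snd w"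
  shows "dist (fst v) (fst w) < 2 * rad k"
  using adjacent_cases(3)[OF assms(1)]
proof (elim disjE conjE)
  assume "snd v = snd w" "hadjacent v w"
  moreover have "lam * rad (snd v) \<le> lam * rad (Suc k)"
    using rad_antimono[OF assms(2)] six_le_lam by (intro mult_left_mono) auto
  ultimately show ?thesis using dist_hadjacent[of v w] lam_rad_Suc_le[of k] by linarith
next
  assume "snd v = Suc (snd w)" "w = par v"
  then show ?thesis
    using parent(3)[OF adjacent_cases(1)[OF assms(1)]] rad_antimono[of k "snd v - 1"] assms(3)
      rad_pos[of k] by simp
next
  assume "snd w = Suc (snd v)" "v = par w"
  then show ?thesis
    using parent(3)[OF adjacent_cases(2)[OF assms(1)]] rad_antimono[OF assms(2)]
      rad_antimono[of k "Suc k"] rad_pos[of k] by (simp add: dist_commute)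
qed

definition anc :: "nat \<Rightarrow> 'a \<times> nat \<Rightarrow> 'a \<times> nat" where
  "anc l w = (par ^^ (snd w - l)) w"

lemma anc_self: "anc (snd w) w = w"
  unfolding anc_def by simp

lemma anc_Suc_level: "snd w = Suc l \<Longrightarrow> anc l w = par w"
  unfolding anc_def by simp

lemma par_anc_Suc:
  assumes "Suc l \<le> snd w"
  shows "par (anc (Suc l) w) = anc l w"
proof -
  have "snd w - l = Suc (snd w - Suc l)" using assms by simp
  then show ?thesis unfolding anc_def by simp
qed

text \<open>The radii decrease at least geometrically with ratio 1/6, hence the factor 6/5.\<close>
lemma funpow_par:
  assumes "w \<in> V" "snd w = l + k"
  shows "(par ^^ k) w \<in> V \<and> snd ((par ^^ k) w) = l \<and>
    dist (fst w) (fst ((par ^^ k) w)) \<le> 6/5 * (rad l - rad (snd w))"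
  using assms
proof (induction k arbitrary: w)
  case 0
  then show ?case by simp
next
  case (Suc k)
  have w: "1 \<le> snd w" "snd (par w) = l + k" using Suc.prems parent(2)[of w] by auto
  note pw = parent[OF Suc.prems(1) w(1)]
  have IH: "(par ^^ k) (par w) \<in> V \<and> snd ((par ^^ k) (par w)) = l \<and>
     dist (fst (par w)) (fst ((par ^^ k) (par w))) \<le> 6/5 * (rad l - rad (snd (par w)))"
    using Suc.IH[OF pw(1) w(2)] .
  have "6 * rad (snd w) \<le> rad (snd (par w))" using six_rad_Suc_le[of "l + k"] w Suc.prems by simp
  moreover have "dist (fst w) (fst (par w)) < rad (snd (par w))" using pw(2,3) by simp
  ultimately have "dist (fst w) (fst ((par ^^ k) (par w))) \<le> 6/5 * (rad l - rad (snd w))"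
    using IH dist_triangle[of "fst w" "fst ((par ^^ k) (par w))" "fst (par w)"]
    unfolding right_diff_distrib by linarith
  then show ?case using IH by (simp add: funpow_Suc_right del: funpow.simps)
qed

lemma ancestor:
  assumes "w \<in> V" "l \<le> snd w"
  shows "anc l w \<in> V" "snd (anc l w) = l" "dist (fst w) (fst (anc l w)) < 6/5 * rad l"
  using funpow_par[OF assms(1), of l "snd w - l"] assms(2) rad_pos[of "snd w"]
  unfolding anc_def by auto

lemma hadjacent_via:
  "v \<in> V \<Longrightarrow> w \<in> V \<Longrightarrow> snd v = snd w \<Longrightarrow> v \<noteq> w \<Longrightarrow> z \<in> X \<Longrightarrow>
    dist (fst v) z < lam * rad (snd v) \<Longrightarrow> dist (fst w) z < lam * rad (snd v) \<Longrightarrow> hadjacent v w"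
  unfolding hadjacent_iff by auto

definition rooted_path :: "'a \<times> nat \<Rightarrow> ('a \<times> nat) list \<Rightarrow> bool" where
  "rooted_path t Q \<longleftrightarrow> t \<in> V \<and> Q \<noteq> [] \<and> distinct Q \<and> set Q \<subseteq> V \<and> successively adjacent Q \<and>
     (\<forall>w\<in>set Q. snd t \<le> snd w) \<and> anc (snd t) (hd Q) = t"

definition escaping :: "'a \<times> nat \<Rightarrow> ('a \<times> nat) list \<Rightarrow> bool" where
  "escaping p \<gamma> \<longleftrightarrow> rooted_path p \<gamma> \<and> 4 * rad (snd p) \<le> dist (fst p) (fst (last \<gamma>))"

definition near :: "'a \<times> nat \<Rightarrow> 'a \<times> nat \<Rightarrow> bool" where
  "near p x \<longleftrightarrow> dist (fst p) (fst x) < 2 * rad (snd p)"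

lemma escaping_take:
  assumes "p \<in> V" "\<gamma> \<noteq> []" "distinct \<gamma>" "set \<gamma> \<subseteq> V" "successively adjacent \<gamma>"
    "anc (snd p) (hd \<gamma>) = p" "j < length \<gamma>" "\<And>i. i \<le> j \<Longrightarrow> snd p \<le> snd (\<gamma> ! i)"
    "4 * rad (snd p) \<le> dist (fst p) (fst (\<gamma> ! j))"
  shows "escaping p (take (Suc j) \<gamma>)"
proof -
  have "snd p \<le> snd w" if "w \<in> set (take (Suc j) \<gamma>)" for w
    using that assms(7,8) by (auto simp: in_set_conv_nth)
  moreover have "last (take (Suc j) \<gamma>) = \<gamma> ! j" using assms(7) by (simp add: take_Suc_conv_app_nth)
  ultimately show ?thesis using assms set_take_subset[of "Suc j" \<gamma>]
    unfolding escaping_def rooted_path_def by (simp add: successively_take hd_take)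
qed

lemma rooted_path_suffix:
  assumes "rooted_path t (S @ R)" "R \<noteq> []" "t' \<in> V" "snd t' = snd t" "anc (snd t) (hd R) = t'"
  shows "rooted_path t' R"
  using assms unfolding rooted_path_def by (auto simp: successively_append_iff)

lemma rooted_path_prefix:
  assumes "rooted_path t (S @ R)" "S \<noteq> []"
  shows "rooted_path t S"
  using assms unfolding rooted_path_def by (auto simp: successively_append_iff)

lemma eventually_rad_less:
  assumes "0 < e"
  obtains b where "\<And>n. b \<le> n \<Longrightarrow> rad n < e"
proof -
  obtain b where b: "1 / e < a ^ b" using real_arch_pow[of a "1 / e"] six_le_a by auto
  have "rad b = 1 / a ^ b" unfolding rad_def using six_le_a by (simp add: powr_minus powr_realpow divide_inverse)
  also have "\<dots> < e" using b assms six_le_a by (simp add: field_simps)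
  finally show ?thesis using that rad_antimono by (meson le_less_trans)
qed

lemma ntilde:
  assumes diam: "diameter X = 1/2" and xy: "x \<in> X" "y \<in> X" "x \<noteq> y"
  defines "n \<equiv> ntilde a Xs x y"
  shows "\<exists>z\<in>Xs n. dist z x < 2 * rad n \<and> dist z y < 2 * rad n" "rad (Suc n) \<le> dist x y"
proof -
  define P where "P n \<longleftrightarrow> (\<exists>z\<in>Xs n. dist z x < 2 * rad n \<and> dist z y < 2 * rad n)" for n
  have n: "n = Greatest P" unfolding n_def ntilde_def P_def rad_def by (simp add: dist_commute)
  have "dist x0 x \<le> 1/2" "dist x0 y \<le> 1/2"
    using diameter_bounded_bound[OF compact_imp_bounded[OF compact] x0_in_X] xy diam by auto
  then have "P 0" unfolding P_def using Xs_0 rad_0 by auto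
  obtain b where b: "\<And>n. b \<le> n \<Longrightarrow> rad n < dist x y / 4"
    using eventually_rad_less[of "dist x y / 4"] xy(3) by auto
  have "n < b" if Pn: "P n" for n
  proof (rule ccontr)
    assume "\<not> n < b"
    moreover obtain z where "dist z x < 2 * rad n" "dist z y < 2 * rad n" using Pn unfolding P_def by blast
    ultimately show False using b[of n] dist_triangle3[of x y z] by linarith
  qed
  then have "P n" "\<not> P (Suc n)"
    using GreatestI_nat[of P 0 b] Greatest_le_nat[of P "Suc n" b] \<open>P 0\<close> n by (auto intro: less_imp_le)
  then show "\<exists>z\<in>Xs n. dist z x < 2 * rad n \<and> dist z y < 2 * rad n" unfolding P_def by blast
  show "rad (Suc n) \<le> dist x y"
  proof (rule ccontr)
    assume "\<not> ?thesis"
    moreover obtain z where z: "z \<in> Xs (Suc n)" "dist z x < rad (Suc n)"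
      using Xs_net[OF xy(1)] by (auto simp: dist_commute)
    ultimately have "dist z x < 2 * rad (Suc n)" "dist z y < 2 * rad (Suc n)"
      using dist_triangle[of z y x] rad_pos[of "Suc n"] by linarith+
    then have "P (Suc n)" using z(1) unfolding P_def by blast
    then show False using \<open>\<not> P (Suc n)\<close> by blast
  qed
qed

end

section \<open>Weights\<close>

locale weighted_filling = filling +
  fixes \<rho> :: "'a \<times> nat \<Rightarrow> real"
  assumes \<rho>_pos: "\<forall>v\<in>verts Xs. 0 < \<rho> v"
begin

abbreviation \<pi> where "\<pi> \<equiv> piw par \<rho>"
abbreviation rhos where "rhos \<equiv> rho_star X a lam Xs par \<rho>"

definition nbhd :: "'a \<times> nat \<Rightarrow> ('a \<times> nat) set" where
  "nbhd q = {w \<in> V. snd w = snd q \<and> (w = q \<or> adjacent q w)}"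

definition pi_min :: "'a \<times> nat \<Rightarrow> real" where
  "pi_min q = Min (\<pi> ` nbhd q)"

lemma finite_nbhd: "finite (nbhd q)"
proof -
  have "nbhd q \<subseteq> (\<lambda>x. (x, snd q)) ` Xs (snd q)"
    unfolding nbhd_def in_verts_iff by (auto simp: image_iff)
  then show ?thesis using finite_Xs finite_subset by blast
qed

lemma self_in_nbhd: "q \<in> V \<Longrightarrow> q \<in> nbhd q"
  unfolding nbhd_def by auto

lemma hadjacent_in_nbhd: "hadjacent q w \<Longrightarrow> w \<in> nbhd q"
  unfolding nbhd_def adj_def hadj_def by auto

lemma in_nbhdD: "w \<in> nbhd q \<Longrightarrow> w \<in> V \<and> snd w = snd q \<and> (w = q \<or> hadjacent q w)"
  unfolding nbhd_def using adjacent_cases(3)[of q w] by auto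

lemma rho_star_le: "w \<in> nbhd q \<Longrightarrow> rhos q \<le> \<rho> w"
  unfolding rho_star_def nbhd_def[symmetric] using finite_nbhd by (intro Min_le) auto

lemma rho_star_pos: "q \<in> V \<Longrightarrow> 0 < rhos q"
  unfolding rho_star_def nbhd_def[symmetric]
  using finite_nbhd self_in_nbhd[of q] \<rho>_pos in_nbhdD[of _ q] by (subst Min_gr_iff) auto

lemma pi_pos:
  assumes "v \<in> V"
  shows "0 < \<pi> v"
proof -
  have "set (genl par k v) \<subseteq> V" if "v \<in> V" "snd v = k" for k v
    using that by (induction k arbitrary: v) (auto simp: parent)
  then have "set (genealogy par v) \<subseteq> V" unfolding genealogy_def using assms by blast
  then show ?thesis unfolding piw_def using \<rho>_pos by (intro prod_list_pos) auto
qed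

lemma pi_par:
  assumes "w \<in> V" "1 \<le> snd w"
  shows "\<pi> w = \<pi> (par w) * \<rho> w"
proof -
  obtain k where k: "snd w = Suc k" using assms(2) by (cases "snd w") auto
  then have "snd (par w) = k" using parent(2)[OF assms] by simp
  then show ?thesis unfolding piw_def genealogy_def k by simp
qed

lemma sum_pi_mono: "A \<subseteq> B \<Longrightarrow> finite B \<Longrightarrow> B \<subseteq> V \<Longrightarrow> sum \<pi> A \<le> sum \<pi> B"
  by (rule sum_mono2) (auto intro: less_imp_le pi_pos)

lemma sum_pi_nonneg: "B \<subseteq> V \<Longrightarrow> 0 \<le> sum \<pi> B"
  by (rule sum_nonneg) (auto intro: less_imp_le pi_pos)

lemma pi_min_le: "w \<in> nbhd q \<Longrightarrow> pi_min q \<le> \<pi> w"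
  unfolding pi_min_def using finite_nbhd by (intro Min_le) auto

lemma pi_min_pos: "q \<in> V \<Longrightarrow> 0 < pi_min q"
  unfolding pi_min_def using finite_nbhd self_in_nbhd[of q] pi_pos in_nbhdD[of _ q]
  by (subst Min_gr_iff) auto

lemma pi_min_greatest: "q \<in> V \<Longrightarrow> (\<And>w. w \<in> nbhd q \<Longrightarrow> c \<le> \<pi> w) \<Longrightarrow> c \<le> pi_min q"
  unfolding pi_min_def using finite_nbhd self_in_nbhd[of q] by (subst Min_ge_iff) auto

lemma pi_min_attained:
  assumes "q \<in> V"
  obtains w where "w \<in> nbhd q" "pi_min q = \<pi> w"
proof -
  have "Min (\<pi> ` nbhd q) \<in> \<pi> ` nbhd q" using finite_nbhd self_in_nbhd[OF assms] by (intro Min_in) auto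
  then show ?thesis using that unfolding pi_min_def by auto
qed

text \<open>The parent of any neighbour \<open>w\<close> of \<open>q\<close> is a neighbour of \<open>p\<close>: this is how a horizontal
  step at level \<open>l + 1\<close> near \<open>p\<close> is paid for by a single vertex.\<close>
lemma pi_min_mult_rho_star_le:
  assumes p: "p \<in> V" "snd p = l"
    and q: "q \<in> V" "snd q = Suc l" "dist (fst p) (fst q) < 2 * rad l"
    and w: "w \<in> nbhd q"
  shows "pi_min p * rhos q \<le> \<pi> w"
proof -
  have w': "w \<in> V" "snd w = Suc l" "w = q \<or> hadjacent q w" using in_nbhdD[OF w] q by auto
  note pw = parent[OF w'(1), unfolded w'(2), simplified]
  have "dist (fst q) (fst w) < 2 * rad l"
    using w'(2,3) dist_hadjacent[of q w] lam_rad_Suc_le[of l] rad_pos[of l] q(2) by auto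
  moreover have "dist (fst w) (fst (par w)) < rad l" using pw(3) w'(2) by simp
  ultimately have "dist (fst p) (fst (par w)) < lam * rad l"
    using q(3) dist_triangle[of "fst p" "fst (par w)" "fst q"] dist_triangle[of "fst q" "fst (par w)" "fst w"]
      rad_pos[of l] by (intro less_lam_rad) linarith
  moreover have "snd p = snd (par w)" "rad (snd p) = rad l" "1 \<le> snd w"
    using pw(2) w'(2) p(2) by simp_all
  ultimately have "par w \<in> nbhd p"
    using hadjacent_in_nbhd[OF hadjacentI[OF p(1) pw(1)]] self_in_nbhd[OF p(1)]
    by (cases "p = par w") auto
  then have "pi_min p \<le> \<pi> (par w)" by (rule pi_min_le)
  moreover have "rhos q \<le> \<rho> w" using rho_star_le[OF w] .
  ultimately have "pi_min p * rhos q \<le> \<pi> (par w) * \<rho> w"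
    using rho_star_pos[OF q(1)] pi_pos[OF pw(1)] by (intro mult_mono) auto
  then show ?thesis using pi_par[OF w'(1)] w'(2) by simp
qed

lemma L_h_exit_prefix_le:
  assumes ch: "is_hpath X a lam Xs ch" and I: "I (hd ch)" "\<not> I (last ch)"
  obtains h where "is_hpath X a lam Xs h" "hd h = hd ch" "set h \<subseteq> set ch" "\<not> I (last h)"
    "L_h X a lam Xs par h \<rho> \<le> hlength_within I rhos ch"
proof -
  have ne: "ch \<noteq> []" and chV: "set ch \<subseteq> V" using ch unfolding is_hpath_def by auto
  obtain j where j: "0 < j" "j < length ch" "\<not> I (ch ! j)" "\<And>i. i < j \<Longrightarrow> I (ch ! i)"
    using first_exit_index[OF ne I] by metis
  define h where "h = take (Suc j) ch"
  define m where "m = (\<lambda>i. min (rhos (ch ! i)) (rhos (ch ! Suc i)))"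
  have h: "h \<noteq> []" "set h \<subseteq> set ch" "successively hadjacent h" "hd h = hd ch"
    using ne set_take_subset[of "Suc j" ch] ch unfolding h_def is_hpath_def
    by (simp_all add: successively_take hd_take)
  have h': "last h = ch ! j" "length h - 1 = j"
    using j(2) unfolding h_def by (simp_all add: take_Suc_conv_app_nth)
  have "L_h X a lam Xs par h \<rho> = (\<Sum>i<j. m i)"
    unfolding L_h_def h'(2) m_def
  proof (rule sum.cong)
    show "min (rhos (h ! i)) (rhos (h ! Suc i)) = min (rhos (ch ! i)) (rhos (ch ! Suc i))"
      if "i \<in> {..<j}" for i
      using that unfolding h_def by simp
  qed simp
  also have "\<dots> = (\<Sum>i<j. if I (ch ! i) then m i else 0)" using j(4) by (intro sum.cong) auto
  also have "\<dots> \<le> (\<Sum>i<length ch - 1. if I (ch ! i) then m i else 0)"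
  proof (rule sum_mono2)
    have "0 \<le> m i" if "i < length ch - 1" for i
    proof -
      have "ch ! i \<in> V" "ch ! Suc i \<in> V" using that chV nth_mem[of _ ch] by auto
      then show ?thesis using rho_star_pos unfolding m_def by (simp add: less_imp_le)
    qed
    then show "\<And>i. i \<in> {..<length ch - 1} - {..<j} \<Longrightarrow> 0 \<le> (if I (ch ! i) then m i else 0)"
      by simp
    show "{..<j} \<subseteq> {..<length ch - 1}" using j(2) by auto
  qed simp
  also have "\<dots> = hlength_within I rhos ch" unfolding hlength_within_def m_def ..
  finally have "L_h X a lam Xs par h \<rho> \<le> hlength_within I rhos ch" .
  moreover have "is_hpath X a lam Xs h" using h(1,2,3) chV unfolding is_hpath_def by auto
  ultimately show ?thesis using h(2,4) h'(1) j(3) by (intro that) simp_all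
qed

section \<open>Shadows of paths\<close>

text \<open>\<open>ch\<close> is a horizontal path at the level of \<open>t\<close> that follows \<open>Q\<close> from above up to its end,
  and whose length near \<open>p\<close>, weighted by \<open>pi_min p\<close>, is paid for by the vertices of \<open>Q\<close>
  other than a leading \<open>t\<close>.\<close>
definition shadow :: "'a \<times> nat \<Rightarrow> ('a \<times> nat) list \<Rightarrow> 'a \<times> nat \<Rightarrow> ('a \<times> nat) list \<Rightarrow> bool" where
  "shadow p Q t ch \<longleftrightarrow> is_hpath X a lam Xs ch \<and> (\<forall>x\<in>set ch. snd x = snd t) \<and> hd ch = t \<and>
     (if snd (last Q) = snd t then last ch = last Q
      else dist (fst (last ch)) (fst (last Q)) < 4 * rad (snd t)) \<and>
     pi_min p * hlength_within (near p) rhos ch \<le> sum \<pi> (set (if hd Q = t then tl Q else Q))"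

lemma shadow_single:
  assumes "t \<in> V" "set Q \<subseteq> V"
    "if snd (last Q) = snd t then last Q = t else dist (fst t) (fst (last Q)) < 4 * rad (snd t)"
  shows "shadow p Q t [t]"
proof -
  have "set (tl Q) \<subseteq> set Q" by (cases Q) auto
  then have "0 \<le> sum \<pi> (set (if hd Q = t then tl Q else Q))"
    using assms(2) by (intro sum_pi_nonneg) auto
  then show ?thesis using assms unfolding shadow_def is_hpath_def
    by (auto simp: hlength_within_single)
qed

lemma shadow_mono:
  assumes "shadow p Q' t ch" "last Q' = last Q"
    "sum \<pi> (set (if hd Q' = t then tl Q' else Q')) \<le> sum \<pi> (set (if hd Q = t then tl Q else Q))"
  shows "shadow p Q t ch"
proof -
  have "pi_min p * hlength_within (near p) rhos ch \<le> sum \<pi> (set (if hd Q = t then tl Q else Q))"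
    using assms(1,3) unfolding shadow_def by linarith
  then show ?thesis using assms(1) unfolding shadow_def assms(2)[symmetric] by simp
qed

lemma shadow_Cons:
  assumes p: "p \<in> V" and ch: "shadow p Q' t' ch" and tt': "hadjacent t t'"
    and pay: "near p t \<Longrightarrow> pi_min p * rhos t \<le> B" and "0 \<le> B" and "last Q' = last Q"
    and sums: "B + sum \<pi> (set (if hd Q' = t' then tl Q' else Q')) \<le>
      sum \<pi> (set (if hd Q = t then tl Q else Q))"
  shows "shadow p Q t (t # ch)"
proof -
  obtain ch' where ch': "ch = t' # ch'"
    using ch unfolding shadow_def is_hpath_def by (cases ch) auto
  have t: "t \<in> V" "snd t = snd t'" using tt' unfolding hadj_def by auto
  have "pi_min p * (if near p t then min (rhos t) (rhos t') else 0) \<le> B"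
  proof (cases "near p t")
    case True
    have "pi_min p * min (rhos t) (rhos t') \<le> pi_min p * rhos t"
      using pi_min_pos[OF p] by (intro mult_left_mono) auto
    then show ?thesis using pay True by simp
  qed (use \<open>0 \<le> B\<close> in simp)
  moreover have "pi_min p * hlength_within (near p) rhos ch \<le> sum \<pi> (set (if hd Q' = t' then tl Q' else Q'))"
    using ch unfolding shadow_def by blast
  ultimately have "pi_min p * hlength_within (near p) rhos (t # ch) \<le>
      sum \<pi> (set (if hd Q = t then tl Q else Q))"
    using sums unfolding ch' hlength_within_Cons2 distrib_left by linarith
  moreover have "is_hpath X a lam Xs (t # ch)"
    using ch tt' t(1) unfolding shadow_def is_hpath_def ch' by simp
  moreover have "\<forall>x\<in>set (t # ch). snd x = snd t" "last (t # ch) = last ch"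
    using ch t(2) unfolding shadow_def ch' by auto
  ultimately show ?thesis
    using ch t(2) assms(6) unfolding shadow_def by (simp only: list.sel(1)) simp
qed

lemma pi_min_mult_rho_star_le_pi_min:
  assumes "p \<in> V" "snd p = l" "q \<in> V" "snd q = Suc l" "near p q"
  shows "pi_min p * rhos q \<le> pi_min q"
  using assms pi_min_mult_rho_star_le[of p l q] unfolding near_def by (intro pi_min_greatest) auto

lemma shadow_exists_head:
  assumes p: "p \<in> V" "snd p = l"
    and Q: "rooted_path t Q" "snd t = Suc l" "hd Q = t"
    and IHQ: "\<And>R t'. length R < length Q \<Longrightarrow> rooted_path t' R \<Longrightarrow> snd t' = Suc l \<Longrightarrow>
      \<exists>ch. shadow p R t' ch"
  shows "\<exists>ch. shadow p Q t ch"
proof (cases "tl Q")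
  case Nil
  then have "Q = [t]" using Q(1,3) unfolding rooted_path_def by (cases Q) auto
  then show ?thesis using shadow_single[of t "[t]" p] Q(1) unfolding rooted_path_def by auto
next
  case (Cons v Q')
  then have Qeq: "Q = t # v # Q'" using Q(1,3) unfolding rooted_path_def by (cases Q) auto
  have tv: "t \<in> V" "adjacent t v" "v \<in> V" "Suc l \<le> snd v" "v \<notin> set Q'"
    using Q(1,2) unfolding rooted_path_def Qeq by auto
  have suffix: "rooted_path t' (v # Q')" if "t' \<in> V" "snd t' = Suc l" "anc (Suc l) v = t'" for t'
    using rooted_path_suffix[of t "[t]" "v # Q'" t'] Q(1,2) Qeq that by simp
  have lt: "length (v # Q') < length Q" and last: "last (v # Q') = last Q" using Qeq by simp_all
  consider "hadjacent t v" "snd v = Suc l" | "t = par v" "snd v = Suc (Suc l)"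
    using adjacent_cases(3)[OF tv(2)] tv(4) Q(2) by auto
  then show ?thesis
  proof cases
    case 1
    have "anc (Suc l) v = v" using anc_self[of v] 1(2) by simp
    then obtain ch where "shadow p (v # Q') v ch"
      using IHQ[OF lt suffix[of v]] tv(3) 1(2) by blast
    moreover have "pi_min p * rhos t \<le> \<pi> v" if "near p t"
      using pi_min_mult_rho_star_le[OF p tv(1) Q(2) _ hadjacent_in_nbhd[OF 1(1)]] that p(2)
      unfolding near_def by simp
    moreover have "\<pi> v + sum \<pi> (set Q') = sum \<pi> (set (tl Q))" using tv(5) Qeq by simp
    ultimately have "shadow p Q t (t # ch)"
      using shadow_Cons[OF p(1) _ 1(1), of "v # Q'" ch "\<pi> v" Q] last pi_pos[OF tv(3)] Q(3) by simp
    then show ?thesis ..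
  next
    case 2
    then have "anc (Suc l) v = t" using anc_Suc_level[of v "Suc l"] by simp
    then obtain ch where "shadow p (v # Q') t ch"
      using IHQ[OF lt suffix[of t]] tv(1) Q(2) by blast
    moreover have "v \<noteq> t" using 2 Q(2) by auto
    ultimately have "shadow p Q t ch"
      using shadow_mono[of p "v # Q'" t ch Q] last Q(3) Qeq by simp
    then show ?thesis ..
  qed
qed

lemma shadow_exists_escape:
  assumes p: "p \<in> V" "snd p = l"
    and escaping_IH: "\<And>q \<sigma>. length \<sigma> \<le> N \<Longrightarrow> snd q = Suc l \<Longrightarrow> escaping q \<sigma> \<Longrightarrow>
      pi_min q \<le> sum \<pi> (set (butlast \<sigma>))"
    and Q: "rooted_path t (S @ s # R)" "snd t = Suc l" "length (S @ s # R) \<le> N" "S \<noteq> []" "hd S \<noteq> t"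
    and S: "Suc (Suc l) \<le> snd (last S)" "dist (fst t) (fst (last S)) < 4 * rad (Suc l)"
    and s: "Suc (Suc l) \<le> snd s" "4 * rad (Suc l) \<le> dist (fst t) (fst s)"
    and IHQ: "\<And>t'. rooted_path t' (s # R) \<Longrightarrow> snd t' = Suc l \<Longrightarrow> \<exists>ch. shadow p (s # R) t' ch"
  shows "\<exists>ch. shadow p (S @ s # R) t ch"
proof -
  have Q': "t \<in> V" "distinct (S @ s # R)" "set (S @ s # R) \<subseteq> V" "adjacent (last S) s"
    using Q(1,4) unfolding rooted_path_def by (auto simp: successively_append_iff)
  have "rooted_path t (S @ [s])" using rooted_path_prefix[of t "S @ [s]" R] Q(1) by simp
  then have "escaping t (S @ [s])" using s(2) Q(2) unfolding escaping_def by simp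
  then have pay_t: "pi_min t \<le> sum \<pi> (set S)" using escaping_IH[of "S @ [s]" t] Q(2,3) by simp
  define t' where "t' = anc (Suc l) s"
  have t': "t' \<in> V" "snd t' = Suc l" "dist (fst s) (fst t') < 6/5 * rad (Suc l)"
    using ancestor[of s "Suc l"] Q'(3) s(1) unfolding t'_def by auto
  have "rooted_path t' (s # R)"
    using rooted_path_suffix[OF Q(1) _ t'(1)] t'(2) Q(2) unfolding t'_def by simp
  then obtain ch where ch: "shadow p (s # R) t' ch" using IHQ t'(2) by blast
  have lastS: "last S \<in> V" using Q'(3) Q(4) by auto
  have "dist (fst s) (fst (last S)) < 2 * rad (Suc l)"
    using dist_adjacent[OF Q'(4) S(1)] s(1) by (simp add: dist_commute)
  then have "dist (fst t) (fst (last S)) < lam * rad (Suc l)"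
    "dist (fst t') (fst (last S)) < lam * rad (Suc l)"
    using S(2) t'(3) dist_triangle[of "fst t'" "fst (last S)" "fst s"] dist_commute[of "fst t'" "fst s"]
      rad_pos[of "Suc l"] by (intro less_lam_rad, linarith)+
  moreover have "t \<noteq> t'"
    using s(2) t'(3) rad_pos[of "Suc l"] by (auto simp: dist_commute)
  ultimately have tt': "hadjacent t t'"
    using hadjacent_via[OF Q'(1) t'(1) _ _ fst_in_X[OF lastS]] Q(2) t'(2) by simp
  have pay: "pi_min p * rhos t \<le> sum \<pi> (set S)" if "near p t"
    using pi_min_mult_rho_star_le_pi_min[OF p Q'(1) Q(2) that] pay_t by linarith
  have "sum \<pi> (set S) + sum \<pi> (set (if hd (s # R) = t' then R else s # R)) \<le>
      sum \<pi> (set (S @ s # R))"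
    using Q'(2,3) sum_pi_mono[of "set R" "set (s # R)"] by (auto simp: sum.union_disjoint)
  then have sums: "sum \<pi> (set S) + sum \<pi> (set (if hd (s # R) = t' then tl (s # R) else s # R)) \<le>
      sum \<pi> (set (if hd (S @ s # R) = t then tl (S @ s # R) else S @ s # R))"
    using Q(4,5) by (simp add: hd_append cong: if_cong)
  have "shadow p (S @ s # R) t (t # ch)"
    by (rule shadow_Cons[OF p(1) ch tt' pay _ _ sums])
      (use sum_pi_nonneg[of "set S"] Q'(3) Q(4) in simp_all)
  then show ?thesis ..
qed

lemma shadow_exists_resurface:
  assumes p: "p \<in> V" "snd p = l"
    and Q: "rooted_path t (S @ s # R)" "snd t = Suc l" "S \<noteq> []" "hd S \<noteq> t"
    and S: "Suc (Suc l) \<le> snd (last S)" "dist (fst t) (fst (last S)) < 4 * rad (Suc l)"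
    and s: "snd s = Suc l"
    and IHQ: "\<And>t'. rooted_path t' (s # R) \<Longrightarrow> snd t' = Suc l \<Longrightarrow> \<exists>ch. shadow p (s # R) t' ch"
  shows "\<exists>ch. shadow p (S @ s # R) t ch"
proof -
  have Q': "t \<in> V" "distinct (S @ s # R)" "set (S @ s # R) \<subseteq> V" "adjacent (last S) s"
    using Q(1,3) unfolding rooted_path_def by (auto simp: successively_append_iff)
  have lastS: "last S \<in> V" using Q'(3) Q(3) by auto
  have "s = par (last S)" "snd (last S) = Suc (Suc l)"
    using adjacent_cases(3)[OF Q'(4)] S(1) s by auto
  then have "dist (fst (last S)) (fst s) < rad (Suc l)" using parent(3)[OF lastS] by simp
  have "anc (snd t) s = s" using anc_self[of s] s Q(2) by simp
  then have "rooted_path s (s # R)"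
    using rooted_path_suffix[OF Q(1), of s] Q'(3) s Q(2) by simp
  then obtain ch where ch: "shadow p (s # R) s ch" using IHQ s by blast
  have sums: "sum \<pi> (set (s # R)) \<le> sum \<pi> (set (S @ s # R))"
    using Q'(3) by (intro sum_pi_mono) auto
  show ?thesis
  proof (cases "t = s")
    case True
    have "sum \<pi> (set R) \<le> sum \<pi> (set (S @ s # R))"
      using Q'(3) by (intro sum_pi_mono) auto
    then have "shadow p (S @ s # R) s ch"
      by (intro shadow_mono[OF ch]) (use Q(3,4) True in \<open>simp_all add: hd_append\<close>)
    then show ?thesis using True by blast
  next
    case False
    have "dist (fst t) (fst (last S)) < lam * rad (Suc l)"
      "dist (fst s) (fst (last S)) < lam * rad (Suc l)"
      using S(2) \<open>dist (fst (last S)) (fst s) < rad (Suc l)\<close> rad_pos[of "Suc l"]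
      by (auto intro!: less_lam_rad simp: dist_commute)
    then have "hadjacent t s"
      using hadjacent_via[OF Q'(1) _ _ False fst_in_X[OF lastS]] Q'(3) Q(2) s by simp
    moreover have "pi_min p * rhos t \<le> \<pi> s" if "near p t"
      using pi_min_mult_rho_star_le[OF p Q'(1) Q(2) _ hadjacent_in_nbhd[OF \<open>hadjacent t s\<close>]] that p(2)
      unfolding near_def by simp
    moreover have "\<pi> s + sum \<pi> (set R) = sum \<pi> (set (s # R))" using Q'(2) by simp
    ultimately have "shadow p (S @ s # R) t (t # ch)"
      using shadow_Cons[OF p(1) ch, where B = "\<pi> s" and Q = "S @ s # R"] sums pi_pos[of s] Q'(3) Q(3,4)
      by (simp add: hd_append cong: if_cong)
    then show ?thesis ..
  qed
qed

lemma shadow_exists_deep: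
  assumes p: "p \<in> V" "snd p = l"
    and escaping_IH: "\<And>q \<sigma>. length \<sigma> \<le> N \<Longrightarrow> snd q = Suc l \<Longrightarrow> escaping q \<sigma> \<Longrightarrow>
      pi_min q \<le> sum \<pi> (set (butlast \<sigma>))"
    and Q: "rooted_path t Q" "snd t = Suc l" "hd Q \<noteq> t" "length Q \<le> N"
    and IHQ: "\<And>R t'. length R < length Q \<Longrightarrow> rooted_path t' R \<Longrightarrow> snd t' = Suc l \<Longrightarrow>
      \<exists>ch. shadow p R t' ch"
  shows "\<exists>ch. shadow p Q t ch"
proof -
  define deep_near where "deep_near w \<longleftrightarrow> Suc (Suc l) \<le> snd w \<and> dist (fst t) (fst w) < 4 * rad (Suc l)" for w
  define S where "S = takeWhile deep_near Q"
  define R where "R = dropWhile deep_near Q"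
  have Q': "Q \<noteq> []" "set Q \<subseteq> V" "\<forall>w\<in>set Q. Suc l \<le> snd w" "anc (Suc l) (hd Q) = t"
    using Q(1,2) unfolding rooted_path_def by auto
  have hdQ: "hd Q \<in> V" "Suc l \<le> snd (hd Q)" using Q'(1,2,3) by auto
  have "snd (hd Q) \<noteq> Suc l" using Q'(4) Q(3) anc_self[of "hd Q"] by auto
  moreover have "dist (fst t) (fst (hd Q)) < 4 * rad (Suc l)"
    using ancestor(3)[OF hdQ] Q'(4) rad_pos[of "Suc l"] by (simp add: dist_commute)
  ultimately have "deep_near (hd Q)" using hdQ(2) unfolding deep_near_def by simp
  then have S: "S \<noteq> []" "hd S = hd Q" unfolding S_def using Q'(1) by (cases Q; simp)+
  then have "deep_near (last S)" unfolding S_def by (metis last_in_set set_takeWhileD)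
  then have lastS: "Suc (Suc l) \<le> snd (last S)" "dist (fst t) (fst (last S)) < 4 * rad (Suc l)"
    unfolding deep_near_def by auto
  have QSR: "Q = S @ R" unfolding S_def R_def by simp
  show ?thesis
  proof (cases R)
    case Nil
    then have "last Q = last S" using QSR by simp
    then show ?thesis using shadow_single[of t Q p] Q(1,2) Q'(2) lastS unfolding rooted_path_def by auto
  next
    case (Cons s R')
    have IHR: "\<exists>ch. shadow p (s # R') t' ch" if "rooted_path t' (s # R')" "snd t' = Suc l" for t'
      using IHQ[OF _ that] QSR Cons S(1) by simp
    have Q'': "rooted_path t (S @ s # R')" "hd S \<noteq> t" "length (S @ s # R') \<le> N"
      using Q QSR Cons S(2) by simp_all
    have "\<not> deep_near s" using Cons unfolding R_def by (metis dropWhile_eq_Cons_conv)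
    show ?thesis
    proof (cases "Suc (Suc l) \<le> snd s")
      case True
      then have "4 * rad (Suc l) \<le> dist (fst t) (fst s)" using \<open>\<not> deep_near s\<close> unfolding deep_near_def by simp
      then show ?thesis
        using shadow_exists_escape[OF p escaping_IH Q''(1) Q(2) Q''(3) S(1) Q''(2) lastS True] IHR
          QSR Cons by simp
    next
      case False
      then have "snd s = Suc l" using Q'(3) QSR Cons by auto
      then show ?thesis
        using shadow_exists_resurface[OF p Q''(1) Q(2) S(1) Q''(2) lastS] IHR QSR Cons by simp
    qed
  qed
qed

lemma shadow_exists:
  assumes p: "p \<in> V" "snd p = l"
    and escaping_IH: "\<And>q \<sigma>. length \<sigma> \<le> N \<Longrightarrow> snd q = Suc l \<Longrightarrow> escaping q \<sigma> \<Longrightarrow>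
      pi_min q \<le> sum \<pi> (set (butlast \<sigma>))"
  shows "rooted_path t Q \<Longrightarrow> snd t = Suc l \<Longrightarrow> length Q \<le> N \<Longrightarrow> \<exists>ch. shadow p Q t ch"
proof (induction "length Q" arbitrary: Q t rule: less_induct)
  case less
  have IHQ: "\<exists>ch. shadow p R t' ch"
    if "length R < length Q" "rooted_path t' R" "snd t' = Suc l" for R t'
    using less.hyps[OF that(1,2,3)] that(1) less.prems(3) by simp
  show ?case
  proof (cases "hd Q = t")
    case True
    then show ?thesis using shadow_exists_head[OF p less.prems(1,2) True IHQ] by blast
  next
    case False
    then show ?thesis
      using shadow_exists_deep[OF p escaping_IH less.prems(1,2) False less.prems(3) IHQ] by blast
  qed
qed

lemma pi_min_le_shadow:
  assumes H3': "H3' X a lam Xs par \<rho>" and p: "p \<in> V" "snd p = l"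
    and ch: "shadow p Q t ch" and t: "snd t = Suc l" "dist (fst p) (fst t) < rad l"
    and far: "\<not> near p (last ch)"
  shows "pi_min p \<le> sum \<pi> (set (if hd Q = t then tl Q else Q))"
proof -
  have ch': "is_hpath X a lam Xs ch" "\<forall>x\<in>set ch. snd x = Suc l" "hd ch = t"
    using ch t(1) unfolding shadow_def by auto
  have tV: "t \<in> V" using ch' unfolding is_hpath_def by auto
  have "near p (hd ch)" using ch'(3) t(2) rad_pos[of l] p(2) unfolding near_def by simp
  then obtain h where h: "is_hpath X a lam Xs h" "hd h = t" "set h \<subseteq> set ch" "\<not> near p (last h)"
    "L_h X a lam Xs par h \<rho> \<le> hlength_within (near p) rhos ch"
    using L_h_exit_prefix_le[OF ch'(1), of "near p"] far ch'(3) by metis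
  have "h \<in> Gamma_v X a lam Xs p"
    using h ch'(2) t fst_in_X[OF tV] p(2) unfolding Gamma_v_def Bx_def rad_def[symmetric] near_def
    by auto
  then have "1 \<le> L_h X a lam Xs par h \<rho>" using H3' p(1) unfolding H3'_def by blast
  then have "pi_min p \<le> pi_min p * hlength_within (near p) rhos ch"
    using h(5) pi_min_pos[OF p(1)] by (simp add: mult_le_cancel_left1 order.trans)
  also have "\<dots> \<le> sum \<pi> (set (if hd Q = t then tl Q else Q))" using ch unfolding shadow_def by blast
  finally show ?thesis .
qed

lemma shadow_last_not_near:
  assumes p: "p \<in> V" "snd p = l" and ch: "shadow p Q t ch" and t: "snd t = Suc l"
    and Q: "Q \<noteq> []" "\<forall>w\<in>set Q. Suc l \<le> snd w"
    and e: "adjacent (last Q) e" "l \<le> snd e" "4 * rad l \<le> dist (fst p) (fst e)"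
  shows "\<not> near p (last ch)"
proof -
  have lastQ: "Suc l \<le> snd (last Q)" using Q by simp
  have "dist (fst (last ch)) (fst (last Q)) + dist (fst (last Q)) (fst e) \<le> 2 * rad l"
  proof (cases "snd (last Q) = Suc l")
    case True
    then have "last ch = last Q" using ch t unfolding shadow_def by simp
    then show ?thesis using dist_adjacent[OF e(1) lastQ e(2)] by simp
  next
    case False
    then have "dist (fst (last ch)) (fst (last Q)) < 4 * rad (Suc l)"
      using ch t unfolding shadow_def by simp
    moreover have "Suc l \<le> snd e"
      using adjacent_cases(3)[OF e(1)] lastQ False by auto
    then have "dist (fst (last Q)) (fst e) < 2 * rad (Suc l)"
      using dist_adjacent[OF e(1)] lastQ False by simp
    ultimately show ?thesis using six_rad_Suc_le[of l] rad_pos[of l] by linarith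
  qed
  then show ?thesis
    using e(3) p(2) dist_triangle[of "fst p" "fst e" "fst (last ch)"]
      dist_triangle[of "fst (last ch)" "fst e" "fst (last Q)"] unfolding near_def p(2) by linarith
qed

lemma pi_min_le_sum_deeper:
  assumes H3': "H3' X a lam Xs par \<rho>" and p: "p \<in> V" "snd p = l"
    and P: "P \<noteq> []" "distinct P" "set P \<subseteq> V" "successively adjacent P" "\<forall>w\<in>set P. Suc l \<le> snd w"
      "anc l (hd P) = p"
    and e: "adjacent (last P) e" "l \<le> snd e" "4 * rad l \<le> dist (fst p) (fst e)"
    and escaping_IH: "\<And>q \<sigma>. length \<sigma> \<le> length P \<Longrightarrow> snd q = Suc l \<Longrightarrow> escaping q \<sigma> \<Longrightarrow>
      pi_min q \<le> sum \<pi> (set (butlast \<sigma>))"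
  shows "pi_min p \<le> sum \<pi> (set P)"
proof -
  define t where "t = anc (Suc l) (hd P)"
  have hd: "hd P \<in> V" "Suc l \<le> snd (hd P)" using P(1,3,5) by auto
  have t: "t \<in> V" "snd t = Suc l" "par t = p"
    using ancestor[OF hd] par_anc_Suc[OF hd(2)] P(6) unfolding t_def by auto
  have "dist (fst p) (fst t) < rad l" using parent(3)[OF t(1)] t by (simp add: dist_commute)
  have "rooted_path t P" using P t(1,2) unfolding rooted_path_def t_def by auto
  then obtain ch where ch: "shadow p P t ch" using shadow_exists[OF p escaping_IH] t(2) by blast
  then have "\<not> near p (last ch)" using shadow_last_not_near[OF p ch t(2) P(1,5) e] by simp
  then have "pi_min p \<le> sum \<pi> (set (if hd P = t then tl P else P))"
    using pi_min_le_shadow[OF H3' p ch t(2) \<open>dist (fst p) (fst t) < rad l\<close>] by blast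
  also have "\<dots> \<le> sum \<pi> (set P)" using P(3) list.set_sel(2)[OF P(1)] by (intro sum_pi_mono) auto
  finally show ?thesis .
qed

lemma pi_min_le_escaping:
  assumes H3': "H3' X a lam Xs par \<rho>"
  shows "escaping p \<gamma> \<Longrightarrow> pi_min p \<le> sum \<pi> (set (butlast \<gamma>))"
proof (induction "length \<gamma>" arbitrary: p \<gamma> rule: less_induct)
  case less
  define l where "l = snd p"
  have p: "p \<in> V" "snd p = l" and \<gamma>: "\<gamma> \<noteq> []" "distinct \<gamma>" "set \<gamma> \<subseteq> V" "successively adjacent \<gamma>"
    "\<forall>w\<in>set \<gamma>. l \<le> snd w" "anc l (hd \<gamma>) = p" "4 * rad l \<le> dist (fst p) (fst (last \<gamma>))"
    using less.prems unfolding escaping_def rooted_path_def l_def by auto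
  have "hd \<gamma> \<in> V" using \<gamma>(1,3) by auto
  then have "dist (fst p) (fst (hd \<gamma>)) < 4 * rad l"
    using ancestor(3)[of "hd \<gamma>" l] \<gamma>(1,5,6) rad_pos[of l] by (simp add: dist_commute)
  moreover have "\<not> dist (fst p) (fst (last \<gamma>)) < 4 * rad l" using \<gamma>(7) by simp
  ultimately obtain j where j: "0 < j" "j < length \<gamma>" "\<not> dist (fst p) (fst (\<gamma> ! j)) < 4 * rad l"
    "\<And>i. i < j \<Longrightarrow> dist (fst p) (fst (\<gamma> ! i)) < 4 * rad l"
    using first_exit_index[OF \<gamma>(1), of "\<lambda>w. dist (fst p) (fst w) < 4 * rad l"] by metis
  define P where "P = take j \<gamma>"
  have P: "P \<noteq> []" "hd P = hd \<gamma>" "set P \<subseteq> set (butlast \<gamma>)" "distinct P" "successively adjacent P"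
    using j \<gamma>(1,2,4) unfolding P_def butlast_conv_take
    by (auto simp: hd_take set_take_subset_set_take successively_take)
  have PV: "set P \<subseteq> V" using P(3) \<gamma>(3) by (auto dest: in_set_butlastD)
  have "pi_min p \<le> sum \<pi> (set P)"
  proof (cases "\<exists>w\<in>set P. snd w = l")
    case True
    then obtain w where w: "w \<in> set P" "snd w = l" by blast
    then obtain i where "i < j" "\<gamma> ! i = w" using j(2) unfolding P_def by (auto simp: in_set_conv_nth)
    then have "dist (fst p) (fst w) < 4 * rad l" using j(4) by blast
    then have "dist (fst p) (fst w) < lam * rad (snd p)"
      using p(2) rad_pos[of l] by (intro less_lam_rad) auto
    moreover have "w \<in> V" using w(1) PV by auto
    ultimately have "w \<in> nbhd p"
      using hadjacent_in_nbhd[OF hadjacentI[OF p(1) \<open>w \<in> V\<close>]] self_in_nbhd[OF p(1)] w(2) p(2)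
      by (cases "p = w") auto
    then show ?thesis using pi_min_le sum_pi_mono[of "{w}" "set P"] w(1) PV by fastforce
  next
    case False
    have "last P = \<gamma> ! (j - 1)" using P(1) j(1,2) unfolding P_def by (subst last_conv_nth) auto
    then have "adjacent (last P) (\<gamma> ! j)" using successively_nth[OF \<gamma>(4), of "j - 1"] j(1,2) by simp
    moreover have "\<forall>w\<in>set P. Suc l \<le> snd w"
      using False \<gamma>(5) P_def by (metis Suc_leI in_set_takeD le_neq_implies_less)
    moreover have "pi_min q \<le> sum \<pi> (set (butlast \<sigma>))"
      if "length \<sigma> \<le> length P" "snd q = Suc l" "escaping q \<sigma>" for q \<sigma>
      using less.hyps[OF _ that(3)] that(1) j(2) unfolding P_def by simp
    ultimately show ?thesis
      using pi_min_le_sum_deeper[OF H3' p P(1,4) PV P(5)] P(2) \<gamma>(5,6) j(2,3) by simp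
  qed
  also have "\<dots> \<le> sum \<pi> (set (butlast \<gamma>))"
    using P(3) \<gamma>(3) by (intro sum_pi_mono) (auto dest: in_set_butlastD)
  finally show ?case .
qed

section \<open>Condition (H3)\<close>

lemma pi_anc_mult_pow_le:
  assumes \<eta>: "0 \<le> \<eta>" "\<forall>v\<in>V. \<eta> \<le> \<rho> v" and w: "w \<in> V" "l \<le> snd w"
  shows "\<pi> (anc l w) * \<eta> ^ (snd w - l) \<le> \<pi> w"
proof -
  have "\<pi> ((par ^^ k) w) * \<eta> ^ k \<le> \<pi> w" if "w \<in> V" "snd w = l + k" for k w
    using that
  proof (induction k arbitrary: w)
    case 0
    then show ?case by simp
  next
    case (Suc k)
    have w1: "1 \<le> snd w" using Suc.prems by simp
    have IH: "\<pi> ((par ^^ k) (par w)) * \<eta> ^ k \<le> \<pi> (par w)"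
      using Suc.IH parent[OF Suc.prems(1) w1] Suc.prems(2) by simp
    have "\<pi> ((par ^^ k) (par w)) * \<eta> ^ k * \<eta> \<le> \<pi> (par w) * \<rho> w"
      using IH \<eta> Suc.prems(1) pi_pos[OF parent(1)[OF Suc.prems(1) w1]] by (intro mult_mono) auto
    moreover have "(par ^^ Suc k) w = (par ^^ k) (par w)"
      by (simp add: funpow_Suc_right del: funpow.simps)
    ultimately show ?case unfolding pi_par[OF Suc.prems(1) w1] power_Suc2 by (simp add: mult.assoc)
  qed
  then show ?thesis using w unfolding anc_def by simp
qed

lemma escaping_nbhd_vertex:
  assumes H3': "H3' X a lam Xs par \<rho>" and \<sigma>: "escaping p \<sigma>"
  obtains q where "q \<in> V" "snd q = snd p" "dist (fst p) (fst q) < 2 * lam * rad (snd p)"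
    "\<pi> q \<le> sum \<pi> (set (butlast \<sigma>))"
proof -
  have p: "p \<in> V" using \<sigma> unfolding escaping_def rooted_path_def by simp
  obtain q where q: "q \<in> nbhd p" "pi_min p = \<pi> q" using pi_min_attained[OF p] .
  then have q': "q \<in> V" "snd q = snd p" "q = p \<or> hadjacent p q" using in_nbhdD by auto
  show ?thesis
  proof (rule that[OF q'(1,2)])
    show "dist (fst p) (fst q) < 2 * lam * rad (snd p)"
      using q'(3) dist_hadjacent[of p q] six_le_lam rad_pos[of "snd p"] by auto
    show "\<pi> q \<le> sum \<pi> (set (butlast \<sigma>))" using pi_min_le_escaping[OF H3' \<sigma>] q(2) by simp
  qed
qed

lemma path_pays_near_vertex:
  assumes H3': "H3' X a lam Xs par \<rho>" and p: "p \<in> V" "snd p = Suc k"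
    and \<gamma>: "\<gamma> \<noteq> []" "distinct \<gamma>" "set \<gamma> \<subseteq> V" "successively adjacent \<gamma>"
      "Suc k \<le> snd (hd \<gamma>)" "anc (Suc k) (hd \<gamma>) = p" "4 * rad (Suc k) \<le> dist (fst p) (fst (last \<gamma>))"
  obtains v where "v \<in> V" "k \<le> snd v" "snd v \<le> Suc k" "dist (fst p) (fst v) < 2 * rad k"
    "\<pi> v \<le> sum \<pi> (set \<gamma>)"
proof -
  define inside where "inside w \<longleftrightarrow> Suc k \<le> snd w \<and> dist (fst p) (fst w) < 4 * rad (Suc k)" for w
  have "hd \<gamma> \<in> V" using \<gamma>(1,3) by auto
  then have "inside (hd \<gamma>)"
    using ancestor(3)[of "hd \<gamma>" "Suc k"] \<gamma>(5,6) rad_pos[of "Suc k"] unfolding inside_def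
    by (simp add: dist_commute)
  moreover have "\<not> inside (last \<gamma>)" using \<gamma>(7) unfolding inside_def by simp
  ultimately obtain j where j: "0 < j" "j < length \<gamma>" "\<not> inside (\<gamma> ! j)" "\<And>i. i < j \<Longrightarrow> inside (\<gamma> ! i)"
    using first_exit_index[OF \<gamma>(1), of inside] by metis
  have six: "6 * rad (Suc k) \<le> rad k" "0 < rad (Suc k)" using six_rad_Suc_le rad_pos by auto
  have nth: "\<gamma> ! i \<in> V" "\<pi> (\<gamma> ! i) \<le> sum \<pi> (set \<gamma>)" if "i < length \<gamma>" for i
    using that \<gamma>(3) sum_pi_mono[of "{\<gamma> ! i}" "set \<gamma>"] by auto
  show ?thesis
  proof (cases "snd (\<gamma> ! j) < Suc k")
    case True
    have u: "inside (\<gamma> ! (j - 1))" "adjacent (\<gamma> ! (j - 1)) (\<gamma> ! j)"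
      using j successively_nth[OF \<gamma>(4), of "j - 1"] by auto
    then have "\<gamma> ! j = par (\<gamma> ! (j - 1))" "snd (\<gamma> ! (j - 1)) = Suc (snd (\<gamma> ! j))"
      using adjacent_cases(3)[OF u(2)] True unfolding inside_def by auto
    moreover have v: "snd (\<gamma> ! j) = k" using calculation(2) u(1) True unfolding inside_def by simp
    ultimately have "dist (fst (\<gamma> ! (j - 1))) (fst (\<gamma> ! j)) < rad k"
      using parent(3)[OF nth(1), of "j - 1"] j(2) by simp
    then have "dist (fst p) (fst (\<gamma> ! j)) < 2 * rad k"
      using u(1) six dist_triangle[of "fst p" "fst (\<gamma> ! j)" "fst (\<gamma> ! (j - 1))"]
      unfolding inside_def by linarith
    then show ?thesis using that[OF nth(1)[OF j(2)] _ _ _ nth(2)[OF j(2)]] v by simp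
  next
    case False
    define \<sigma> where "\<sigma> = take (Suc j) \<gamma>"
    have "Suc k \<le> snd (\<gamma> ! i)" if i: "i \<le> j" for i
      using i j(4)[of i] False unfolding inside_def by (cases "i = j") auto
    then have "escaping p \<sigma>"
      using escaping_take[OF p(1) \<gamma>(1-4), of j] \<gamma>(6) j(2,3) False p(2) unfolding \<sigma>_def inside_def by simp
    then obtain q where "q \<in> V" "snd q = Suc k" "dist (fst p) (fst q) < 2 * lam * rad (Suc k)"
      "\<pi> q \<le> sum \<pi> (set (butlast \<sigma>))"
      using escaping_nbhd_vertex[OF H3'] p(2) by metis
    moreover have "sum \<pi> (set (butlast \<sigma>)) \<le> sum \<pi> (set \<gamma>)"
      using \<gamma>(3) unfolding \<sigma>_def by (intro sum_pi_mono) (auto dest: in_set_butlastD in_set_takeD)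
    ultimately show ?thesis using that lam_rad_Suc_le[of k] by auto
  qed
qed

lemma pi_c_attained:
  assumes "diameter X = 1/2" "x \<in> X" "y \<in> X" "x \<noteq> y"
  obtains c where "c \<in> V" "pi_c X a Xs par \<rho> x y = \<pi> c" "dist (fst c) x < 2 * rad (snd c)"
    "rad (Suc (snd c)) \<le> dist x y"
proof -
  define n where "n = ntilde a Xs x y"
  have C: "cxy X a Xs x y = (\<lambda>z. (z, n)) ` {z \<in> Xs n. dist z x < 2 * rad n \<and> dist z y < 2 * rad n}"
    using assms(2,3) unfolding cxy_def n_def[symmetric] Bx_def rad_def by (auto simp: dist_commute)
  have "finite (cxy X a Xs x y)" "cxy X a Xs x y \<noteq> {}"
    unfolding C using ntilde(1)[OF assms] finite_Xs n_def by auto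
  then have "pi_c X a Xs par \<rho> x y \<in> \<pi> ` cxy X a Xs x y" unfolding pi_c_def by (intro Max_in) auto
  then obtain z where "z \<in> Xs n" "dist z x < 2 * rad n" "pi_c X a Xs par \<rho> x y = \<pi> (z, n)"
    unfolding C by auto
  then show ?thesis using that[of "(z, n)"] ntilde(2)[OF assms] in_verts_iff n_def by auto
qed

lemma pi_le_K0_mult:
  assumes K0: "1 \<le> K0" "\<And>v w. hadjacent v w \<Longrightarrow> \<pi> v \<le> K0 * \<pi> w"
    and "c \<in> V" "w \<in> V" "snd w = snd c" "dist (fst c) (fst w) < lam * rad (snd c)"
  shows "\<pi> c \<le> K0 * \<pi> w"
proof (cases "c = w")
  case True
  then show ?thesis using pi_pos[OF assms(4)] K0(1) by simp
next
  case False
  then show ?thesis using K0(2) hadjacentI assms(3-6) by auto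
qed

lemma pi_mult_sq_le_K0_pi:
  assumes \<eta>: "0 \<le> \<eta>" "\<eta> \<le> 1" "\<forall>v\<in>V. \<eta> \<le> \<rho> v"
    and K0: "1 \<le> K0" "\<And>v w. hadjacent v w \<Longrightarrow> \<pi> v \<le> K0 * \<pi> w"
    and c: "c \<in> V" and v: "v \<in> V" "snd c \<le> snd v" "snd v \<le> snd c + 2"
      "dist (fst c) (fst v) < 4 * rad (snd c)"
  shows "\<pi> c * \<eta>\<^sup>2 \<le> K0 * \<pi> v"
proof -
  define w where "w = anc (snd c) v"
  have w: "w \<in> V" "snd w = snd c" "dist (fst v) (fst w) < 6/5 * rad (snd c)"
    using ancestor[OF v(1,2)] unfolding w_def by auto
  then have "dist (fst c) (fst w) < 6 * rad (snd c)"
    using v(4) dist_triangle[of "fst c" "fst w" "fst v"] rad_pos[of "snd c"] by linarith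
  then have K: "\<pi> c \<le> K0 * \<pi> w" using pi_le_K0_mult[OF K0 c w(1,2)] less_lam_rad by simp
  have "\<eta>\<^sup>2 \<le> \<eta> ^ (snd v - snd c)" using \<eta>(1,2) v(3) by (intro power_decreasing) auto
  then have "\<pi> w * \<eta>\<^sup>2 \<le> \<pi> w * \<eta> ^ (snd v - snd c)"
    using pi_pos[OF w(1)] by (intro mult_left_mono) auto
  also have "\<dots> \<le> \<pi> v" using pi_anc_mult_pow_le[OF \<eta>(1,3) v(1,2)] unfolding w_def .
  finally have "\<pi> w * \<eta>\<^sup>2 \<le> \<pi> v" .
  moreover have "\<pi> c * \<eta>\<^sup>2 \<le> K0 * (\<pi> w * \<eta>\<^sup>2)"
    using mult_right_mono[OF K, of "\<eta>\<^sup>2"] by simp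
  ultimately show ?thesis using K0(1) by (meson mult_left_mono order.trans zero_le_one le_trans)
qed

lemma pi_mult_sq_le_L_rho:
  assumes H3': "H3' X a lam Xs par \<rho>"
    and \<eta>: "0 \<le> \<eta>" "\<eta> \<le> 1" "\<forall>v\<in>V. \<eta> \<le> \<rho> v"
    and K0: "1 \<le> K0" "\<And>v w. hadjacent v w \<Longrightarrow> \<pi> v \<le> K0 * \<pi> w"
    and c: "c \<in> V" "dist (fst c) x < 2 * rad (snd c)" "rad (Suc (snd c)) \<le> dist x y"
    and \<gamma>: "\<gamma> \<in> Gamma_xy X a lam Xs par n x y" "snd c + 3 \<le> n"
  shows "\<pi> c * \<eta>\<^sup>2 \<le> K0 * L_rho par \<rho> \<gamma>"
proof -
  define m where "m = snd c"
  have \<gamma>': "\<gamma> \<noteq> []" "set \<gamma> \<subseteq> V" "successively adjacent \<gamma>" "snd (hd \<gamma>) = n"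
    "dist (fst (hd \<gamma>)) x < rad n" "dist (fst (last \<gamma>)) y < rad n"
    using \<gamma>(1) unfolding Gamma_xy_def is_path_def Bx_def rad_def[symmetric] by auto
  obtain \<gamma>0 where \<gamma>0: "\<gamma>0 \<noteq> []" "distinct \<gamma>0" "successively adjacent \<gamma>0" "hd \<gamma>0 = hd \<gamma>"
    "last \<gamma>0 = last \<gamma>" "set \<gamma>0 \<subseteq> set \<gamma>"
    using successively_loop_erasure[OF \<gamma>'(1,3)] by blast
  define h where "h = hd \<gamma>0"
  have h: "h \<in> V" "Suc (Suc m) \<le> snd h" using \<gamma>0(1,4,6) \<gamma>'(2,4) \<gamma>(2) hd_in_set[of \<gamma>0]
    unfolding h_def m_def by auto
  have ends: "dist (fst h) x < rad n" "dist (fst (last \<gamma>0)) y < rad n"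
    using \<gamma>'(5,6) \<gamma>0(4,5) unfolding h_def by simp_all
  define p where "p = anc (Suc (Suc m)) h"
  have p: "p \<in> V" "snd p = Suc (Suc m)" "dist (fst h) (fst p) < 6/5 * rad (Suc (Suc m))"
    using ancestor[OF h] unfolding p_def by auto
  have r: "rad n \<le> rad (Suc (Suc (Suc m)))" "6 * rad (Suc (Suc (Suc m))) \<le> rad (Suc (Suc m))"
    "6 * rad (Suc (Suc m)) \<le> rad (Suc m)" "6 * rad (Suc m) \<le> rad m" "0 < rad (Suc (Suc m))"
    using rad_antimono \<gamma>(2) six_rad_Suc_le rad_pos unfolding m_def by auto
  have "4 * rad (Suc (Suc m)) \<le> dist (fst p) (fst (last \<gamma>0))"
    using c(3) ends p(3) r dist_triangle[of x y "fst h"] dist_triangle[of "fst h" y "fst p"]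
      dist_triangle[of "fst p" y "fst (last \<gamma>0)"] dist_commute[of x "fst h"]
    unfolding m_def by linarith
  moreover have "set \<gamma>0 \<subseteq> V" using \<gamma>0(6) \<gamma>'(2) by auto
  ultimately obtain v where v: "v \<in> V" "Suc m \<le> snd v" "snd v \<le> Suc (Suc m)"
    "dist (fst p) (fst v) < 2 * rad (Suc m)" "\<pi> v \<le> sum \<pi> (set \<gamma>0)"
    using path_pays_near_vertex[OF H3' p(1,2) \<gamma>0(1,2) _ \<gamma>0(3)] h(2) unfolding p_def h_def by blast
  have "dist (fst c) (fst v) < 4 * rad m"
    using c(2) ends(1) p(3) v(4) r dist_triangle[of "fst c" "fst v" x]
      dist_triangle[of x "fst v" "fst h"] dist_triangle[of "fst h" "fst v" "fst p"] dist_commute[of x "fst h"]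
    unfolding m_def by linarith
  then have "\<pi> c * \<eta>\<^sup>2 \<le> K0 * \<pi> v" using pi_mult_sq_le_K0_pi[OF \<eta> K0 c(1) v(1)] v(2,3) m_def by simp
  also have "\<dots> \<le> K0 * L_rho par \<rho> \<gamma>"
    using v(5) sum_pi_mono[OF \<gamma>0(6) _ \<gamma>'(2)] K0(1) unfolding L_rho_def by (simp add: mult_left_mono)
  finally show ?thesis .
qed

lemma H3_if_H3':
  assumes diam: "diameter X = 1/2" and H3': "H3' X a lam Xs par \<rho>"
    and \<eta>: "0 < \<eta>" "\<eta> \<le> 1" "\<forall>v\<in>V. \<eta> \<le> \<rho> v"
    and K0: "1 \<le> K0" "\<And>v w. hadjacent v w \<Longrightarrow> \<pi> v \<le> K0 * \<pi> w"
  shows "H3 X a lam Xs par \<rho>"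
  unfolding H3_def
proof (intro exI[of _ "K0 / \<eta>\<^sup>2"] conjI ballI impI)
  show "1 \<le> K0 / \<eta>\<^sup>2" using K0(1) \<eta>(1,2) power_le_one[of \<eta> 2] by (simp add: le_divide_eq)
  fix x y assume xy: "x \<in> X" "y \<in> X" "x \<noteq> y"
  obtain c where c: "c \<in> V" "pi_c X a Xs par \<rho> x y = \<pi> c" "dist (fst c) x < 2 * rad (snd c)"
    "rad (Suc (snd c)) \<le> dist x y"
    using pi_c_attained[OF diam xy] by blast
  have "pi_c X a Xs par \<rho> x y / (K0 / \<eta>\<^sup>2) \<le> L_rho par \<rho> \<gamma>"
    if "snd c + 3 \<le> n" "\<gamma> \<in> Gamma_xy X a lam Xs par n x y" for n \<gamma>
    using pi_mult_sq_le_L_rho[OF H3' _ \<eta>(2,3) K0 c(1,3,4) that(2,1)] c(2) K0(1) \<eta>(1)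
    by (simp add: field_simps)
  then show "\<exists>n0. \<forall>n\<ge>n0. \<forall>\<gamma>\<in>Gamma_xy X a lam Xs par n x y.
      pi_c X a Xs par \<rho> x y / (K0 / \<eta>\<^sup>2) \<le> L_rho par \<rho> \<gamma>"
    by blast
qed

end

theorem proposition3p17:
  fixes X :: "'a::metric_space set" and a lam :: real and x0 :: 'a
    and Xs :: "nat \<Rightarrow> 'a set" and par :: "'a \<times> nat \<Rightarrow> 'a \<times> nat"
    and \<rho> :: "'a \<times> nat \<Rightarrow> real"
  assumes "compact X" and "doubling X" and "diameter X = 1/2"
    and "a \<ge> lam" and "lam \<ge> 6"
    and "hyperbolic_filling X a x0 Xs par"
    and "\<forall>v\<in>verts Xs. \<rho> v > 0"
    and "H1 Xs \<rho>" and "H2 X a lam Xs par \<rho>" and "H3' X a lam Xs par \<rho>"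
  shows "H3 X a lam Xs par \<rho>"
proof -
  interpret weighted_filling X a lam x0 Xs par \<rho>
    using assms by unfold_locales auto
  obtain \<eta> where \<eta>: "0 < \<eta>" "\<eta> < 1" "\<forall>v\<in>verts Xs. \<eta> \<le> \<rho> v"
    using assms(8) unfolding H1_def by fastforce
  obtain K0 where "1 \<le> K0" "\<And>v w. hadj X a lam Xs v w \<Longrightarrow> piw par \<rho> v \<le> K0 * piw par \<rho> w"
    using assms(9) unfolding H2_def by blast
  then show ?thesis using H3_if_H3'[OF assms(3,10) \<eta>(1) less_imp_le[OF \<eta>(2)] \<eta>(3)] by blast
qed

end
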